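(* Let $0<\delta_0\le1/253$ and $\lambda,\mu,R>0$. Assume Conditions (C3) and (C6), that $$\mu^2\le\frac{\delta_0R^2}{2(1+J(g^0)+J_h)^2}\quad\text{and}\quad \frac{4\lambda^2s_0}{\Lambda_{\tilde X,\min}^2}\le\delta_0R^2 .$$ Then on the event $\mathcal T(\delta_0,R)$, every minimizer $(\hat\beta,\hat g)$ of the doubly penalised least squares criterion satisfies $$\Big|\mu^2\sum_{j=1}^p J(\hat g,h_j)(\hat\beta_j-\beta^0_j)\Big|\le\sqrt{2\delta_0}\,R^2\,\|\hat\beta-\beta^0\|_1 .$$
   Context: Setting. Let $(x,z)$ be a random vector with $x\in\mathbb R^p$ (a row vector) and $z\in\mathbb R^d$, joint distribution $Q$ and marginal $Q_z$ of $z$; let $(x_i,z_i)$, $i=1,\dots,n$, be i.i.d. copies, $X$ the $n\times p$ matrix with rows $x_i$. Let $\mathcal G$ be a linear subspace of $L_2(Q_z)$ equipped with a semi-inner product $J(\cdot,\cdot)$ with associated seminorm $J(\cdot)$. Fix $\beta^0\in\mathbb R^p$, $g^0\in\mathcal G$; $s_0=|\{j:\beta^0_j\ne0\}|$. Responses $Y=X\beta^0+g^0(Z)+E$, where $g(Z)=(g(z_1),\dots,g(z_n))^T$, $E=(e_1,\dots,e_n)^T$. For a function $f$: $\|f\|^2=\mathbb E f(x,z)^2$, $\|f\|_n^2=\frac1n\sum_i f(x_i,z_i)^2$; for $v\in\mathbb R^n$, $\|v\|_n^2=v^Tv/n$. Estimator: $(\hat\beta,\hat g)$ minimizes $\|Y-X\beta-g(Z)\|_n^2+\lambda\|\beta\|_1+\mu^2J^2(g)$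 over $\mathbb R^p\times\mathcal G$. For $\beta\in\mathbb R^p$, $g\in\mathcal G$, $f=X\beta+g$ denotes $(x,z)\mapsto x\beta+g(z)$ and $\tau(f)=\frac{\lambda\|\beta\|_1}{R\sqrt{\delta_0/2}}+\sqrt{\|X\beta+g\|^2+\mu^2J^2(g)}$; $\mathcal F(R)$ is the set of all such $f$ with $\tau(f)\le R$. $\mathcal T(\delta_0,R)$ is the event that $\sup_{f\in\mathcal F(R)}|\|f\|_n^2-\|f\|^2|\le\delta_0R^2$ and $\sup_{f\in\mathcal F(R)}|E^Tf(X,Z)|/n\le\delta_0R^2$. Let $h(z)=\mathbb E[x\mid z]$ with components $h_j$, $\tilde x=x-h(z)$; $\Lambda_{\tilde X,\min}^2$ is the smallest eigenvalue of $\mathbb E[\tilde x^T\tilde x]$ and $\Lambda_{h,\max}^2$ the largest eigenvalue of $\mathbb E[h(z)^Th(z)]$. Conditions: (C3) $\Lambda_{\tilde X,\min}>0$, $\Lambda_{h,\max}<\infty$; (C6) $h_j\in\mathcal G$ and $J(h_j)\le J_h$ for all $j$, for a constant $J_h$. *)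

theory Defs
  imports "HOL-Probability.Probability"
begin

text \<open>Generic setting: x is a row vector in R^p (type real^'p), z in R^d (type real^'d).
  The joint law Q of (x,z) is a probability measure M on real^'p \<times> real^'d.\<close>

definition l1norm :: "real^'p \<Rightarrow> real" where
  "l1norm b = (\<Sum>j\<in>UNIV. \<bar>b $ j\<bar>)"

definition L2_subspace :: "'a measure \<Rightarrow> ('a \<Rightarrow> real) set \<Rightarrow> bool" where
  "L2_subspace Qz G \<longleftrightarrow>
     (\<lambda>z. 0) \<in> G \<and>
     (\<forall>f\<in>G. \<forall>g\<in>G. (\<lambda>z. f z + g z) \<in> G) \<and>
     (\<forall>c. \<forall>f\<in>G. (\<lambda>z. c * f z) \<in> G) \<and>
     (\<forall>g\<in>G. g \<in> borel_measurable Qz \<and> integrable Qz (\<lambda>z. (g z)^2))"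

definition semi_inner_on :: "('a \<Rightarrow> real) set \<Rightarrow> (('a \<Rightarrow> real) \<Rightarrow> ('a \<Rightarrow> real) \<Rightarrow> real) \<Rightarrow> bool" where
  "semi_inner_on G J \<longleftrightarrow>
     (\<forall>f\<in>G. \<forall>g\<in>G. J f g = J g f) \<and>
     (\<forall>f\<in>G. \<forall>g\<in>G. \<forall>k\<in>G. J (\<lambda>z. f z + g z) k = J f k + J g k) \<and>
     (\<forall>c. \<forall>f\<in>G. \<forall>g\<in>G. J (\<lambda>z. c * f z) g = c * J f g) \<and>
     (\<forall>f\<in>G. 0 \<le> J f f)"

definition seminormJ :: "(('a \<Rightarrow> real) \<Rightarrow> ('a \<Rightarrow> real) \<Rightarrow> real) \<Rightarrow> ('a \<Rightarrow> real) \<Rightarrow> real" where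
  "seminormJ J g = sqrt (J g g)"

definition is_cond_exp_x_given_z ::
  "((real^'p) \<times> (real^'d)) measure \<Rightarrow> (real^'d \<Rightarrow> real^'p) \<Rightarrow> bool" where
  "is_cond_exp_x_given_z M h \<longleftrightarrow>
     (\<forall>j. (\<lambda>z. h z $ j) \<in> borel_measurable borel \<and>
          integrable M (\<lambda>\<omega>. h (snd \<omega>) $ j) \<and>
          integrable M (\<lambda>\<omega>. fst \<omega> $ j) \<and>
          (\<forall>A\<in>sets borel.
             (\<integral>\<omega>. indicator A (snd \<omega>) * (fst \<omega> $ j) \<partial>M) =
             (\<integral>\<omega>. indicator A (snd \<omega>) * (h (snd \<omega>) $ j) \<partial>M)))"

definition cov_xtilde :: "((real^'p) \<times> (real^'d)) measure \<Rightarrow> (real^'d \<Rightarrow> real^'p) \<Rightarrow> real^'p^'p" where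
  "cov_xtilde M h = (\<chi> i j. \<integral>\<omega>. (fst \<omega> $ i - h (snd \<omega>) $ i) * (fst \<omega> $ j - h (snd \<omega>) $ j) \<partial>M)"

definition min_eigenvalue :: "real^'n^'n \<Rightarrow> real" where
  "min_eigenvalue A = Min {l. \<exists>v. v \<noteq> 0 \<and> A *v v = l *\<^sub>R v}"

definition pop_sq :: "((real^'p) \<times> (real^'d)) measure \<Rightarrow> real^'p \<Rightarrow> (real^'d \<Rightarrow> real) \<Rightarrow> real" where
  "pop_sq M b g = (\<integral>\<omega>. (fst \<omega> \<bullet> b + g (snd \<omega>))^2 \<partial>M)"

definition emp_sq :: "nat \<Rightarrow> (nat \<Rightarrow> real^'p) \<Rightarrow> (nat \<Rightarrow> real^'d) \<Rightarrow> real^'p \<Rightarrow> (real^'d \<Rightarrow> real) \<Rightarrow> real" where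
  "emp_sq n xs zs b g = (1 / real n) * (\<Sum>i<n. (xs i \<bullet> b + g (zs i))^2)"

definition tau ::
  "((real^'p) \<times> (real^'d)) measure \<Rightarrow> ((real^'d \<Rightarrow> real) \<Rightarrow> (real^'d \<Rightarrow> real) \<Rightarrow> real)
   \<Rightarrow> real \<Rightarrow> real \<Rightarrow> real \<Rightarrow> real \<Rightarrow> real^'p \<Rightarrow> (real^'d \<Rightarrow> real) \<Rightarrow> real" where
  "tau M J lam mu delta0 R b g =
     lam * l1norm b / (R * sqrt (delta0 / 2)) + sqrt (pop_sq M b g + mu^2 * (seminormJ J g)^2)"

text \<open>The event T(delta0,R), evaluated at a sample realisation (xs, zs, e).\<close>
definition event_T ::
  "((real^'p) \<times> (real^'d)) measure \<Rightarrow> (real^'d \<Rightarrow> real) set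
   \<Rightarrow> ((real^'d \<Rightarrow> real) \<Rightarrow> (real^'d \<Rightarrow> real) \<Rightarrow> real)
   \<Rightarrow> real \<Rightarrow> real \<Rightarrow> real \<Rightarrow> real
   \<Rightarrow> nat \<Rightarrow> (nat \<Rightarrow> real^'p) \<Rightarrow> (nat \<Rightarrow> real^'d) \<Rightarrow> (nat \<Rightarrow> real) \<Rightarrow> bool" where
  "event_T M G J lam mu delta0 R n xs zs e \<longleftrightarrow>
     (\<forall>b. \<forall>g\<in>G. tau M J lam mu delta0 R b g \<le> R \<longrightarrow>
        \<bar>emp_sq n xs zs b g - pop_sq M b g\<bar> \<le> delta0 * R^2 \<and>
        \<bar>\<Sum>i<n. e i * (xs i \<bullet> b + g (zs i))\<bar> / real n \<le> delta0 * R^2)"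

definition crit ::
  "((real^'d \<Rightarrow> real) \<Rightarrow> (real^'d \<Rightarrow> real) \<Rightarrow> real) \<Rightarrow> real \<Rightarrow> real
   \<Rightarrow> nat \<Rightarrow> (nat \<Rightarrow> real) \<Rightarrow> (nat \<Rightarrow> real^'p) \<Rightarrow> (nat \<Rightarrow> real^'d)
   \<Rightarrow> real^'p \<Rightarrow> (real^'d \<Rightarrow> real) \<Rightarrow> real" where
  "crit J lam mu n Y xs zs b g =
     (1 / real n) * (\<Sum>i<n. (Y i - xs i \<bullet> b - g (zs i))^2)
     + lam * l1norm b + mu^2 * (seminormJ J g)^2"

end

theory Submission
  imports Defs
begin

text \<open>The penalty cross term is controlled by Cauchy-Schwarz for J:
  |sum_j J(g_hat, h_j) (beta_hat_j - beta0_j)| \<le> J(g_hat) J_h ||beta_hat - beta0||_1 and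
  J(g_hat) \<le> J(g0) + J(g_hat - g0). The condition on mu takes care of mu J(g0) and mu J_h, so
  everything reduces to the consistency bound mu J(g_hat - g0) \<le> R. This follows from the basic
  inequality of the criterion on the event T together with compatibility: x - h(z) is orthogonal
  to every function of z, so the smallest eigenvalue of E[xtilde^T xtilde] bounds
  ||X beta + g||^2 from below.\<close>

section \<open>Square integrable functions and conditional expectation\<close>

definition square_integrable :: "'a measure \<Rightarrow> ('a \<Rightarrow> real) \<Rightarrow> bool" where
  "square_integrable M f \<longleftrightarrow> f \<in> borel_measurable M \<and> integrable M (\<lambda>x. (f x)^2)"

lemma integrable_mult_square_integrable:
  assumes "square_integrable M f" "square_integrable M g"
  shows "integrable M (\<lambda>x. f x * g x)"
proof (rule Bochner_Integration.integrable_bound[of _ "\<lambda>x. (f x)^2 + (g x)^2"])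
  show "integrable M (\<lambda>x. (f x)^2 + (g x)^2)" "(\<lambda>x. f x * g x) \<in> borel_measurable M"
    using assms unfolding square_integrable_def by auto
  have "2 * \<bar>f x * g x\<bar> \<le> (f x)^2 + (g x)^2" for x
    using sum_squares_bound[of "\<bar>f x\<bar>" "\<bar>g x\<bar>"] by (simp add: abs_mult power2_eq_square)
  then show "AE x in M. norm (f x * g x) \<le> norm ((f x)^2 + (g x)^2)"
    by (intro AE_I2) (smt (verit) real_norm_def zero_le_power2)
qed

lemma square_integrable_add:
  assumes "square_integrable M f" "square_integrable M g"
  shows "square_integrable M (\<lambda>x. f x + g x)"
proof -
  have "integrable M (\<lambda>x. (f x)^2 + 2 * (f x * g x) + (g x)^2)"
    using integrable_mult_square_integrable[OF assms] assms unfolding square_integrable_def by auto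
  moreover have "(\<lambda>x. (f x + g x)^2) = (\<lambda>x. (f x)^2 + 2 * (f x * g x) + (g x)^2)"
    by (auto simp: power2_sum)
  ultimately show ?thesis
    using assms unfolding square_integrable_def by auto
qed

lemma square_integrable_scale:
  assumes "square_integrable M f"
  shows "square_integrable M (\<lambda>x. c * f x)"
proof -
  have "integrable M (\<lambda>x. c^2 * (f x)^2)"
    using assms unfolding square_integrable_def by simp
  then show ?thesis
    using assms unfolding square_integrable_def by (auto simp: power_mult_distrib)
qed

lemma square_integrable_diff:
  "square_integrable M f \<Longrightarrow> square_integrable M g \<Longrightarrow> square_integrable M (\<lambda>x. f x - g x)"
  using square_integrable_add[of M f "\<lambda>x. (-1) * g x"] square_integrable_scale[of M g "-1"] by simp

lemma square_integrable_sum: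
  "finite S \<Longrightarrow> (\<And>j. j \<in> S \<Longrightarrow> square_integrable M (f j)) \<Longrightarrow>
    square_integrable M (\<lambda>x. \<Sum>j\<in>S. f j x)"
proof (induction S rule: finite_induct)
  case empty
  then show ?case by (simp add: square_integrable_def)
next
  case (insert a S)
  then show ?case using square_integrable_add[of M "f a"] by simp
qed

lemma measurable_snd_borel_prod:
  "(snd :: 'a::euclidean_space \<times> 'b::euclidean_space \<Rightarrow> 'b) \<in> borel_measurable borel"
  by (intro borel_measurable_continuous_onI continuous_intros)

text \<open>h(z) is identified with the conditional expectation of x given the sigma-algebra generated
  by z.\<close>
lemma integral_mult_cond_exp_x_given_z:
  fixes M :: "((real^'p) \<times> (real^'d)) measure" and h :: "real^'d \<Rightarrow> real^'p"
    and w :: "real^'d \<Rightarrow> real"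
  assumes PS: "prob_space M" and SM: "sets M = sets borel"
    and CE: "is_cond_exp_x_given_z M h"
    and wm: "w \<in> borel_measurable borel"
    and wi: "integrable M (\<lambda>\<omega>. w (snd \<omega>) * (fst \<omega> $ j))"
  shows "(\<integral>\<omega>. w (snd \<omega>) * (fst \<omega> $ j) \<partial>M) = (\<integral>\<omega>. w (snd \<omega>) * (h (snd \<omega>) $ j) \<partial>M)"
proof -
  interpret prob_space M by (rule PS)
  have spM: "space M = UNIV" using sets_eq_imp_space_eq[OF SM] by simp
  have sndM: "snd \<in> measurable M borel"
    using measurable_snd_borel_prod measurable_cong_sets[OF SM refl] by blast
  have fstjM: "(\<lambda>\<omega>. fst \<omega> $ j) \<in> borel_measurable M"
    using SM by (simp add: measurable_cong_sets[OF SM refl] borel_measurable_continuous_onI continuous_intros)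
  define F where "F = vimage_algebra (space M) snd (borel :: (real^'d) measure)"
  have sub: "subalgebra M F"
    unfolding subalgebra_def F_def using sets_image_in_sets[OF refl sndM] by simp
  interpret fms: finite_measure_subalgebra M F
    by unfold_locales (rule sub)
  have sndF: "snd \<in> measurable F borel"
    unfolding F_def by (rule measurable_vimage_algebra1) simp
  have hjF: "(\<lambda>\<omega>. h (snd \<omega>) $ j) \<in> borel_measurable F"
    using measurable_compose[OF sndF, of "\<lambda>z. h z $ j"] CE
    unfolding is_cond_exp_x_given_z_def by auto
  have wF: "(\<lambda>\<omega>. w (snd \<omega>)) \<in> borel_measurable F"
    using measurable_compose[OF sndF wm] by simp
  have ints: "integrable M (\<lambda>\<omega>. h (snd \<omega>) $ j)" "integrable M (\<lambda>\<omega>. fst \<omega> $ j)"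
    using CE unfolding is_cond_exp_x_given_z_def by auto
  have cond_exp: "AE \<omega> in M. real_cond_exp M F (\<lambda>\<omega>. fst \<omega> $ j) \<omega> = h (snd \<omega>) $ j"
  proof (rule fms.real_cond_exp_charact)
    fix A assume "A \<in> sets F"
    then obtain B where B: "B \<in> sets borel" "A = snd -` B \<inter> space M"
      unfolding F_def using sets_vimage_algebra2[of snd "space M" borel] by auto
    have "\<And>\<omega>. indicator A \<omega> = (indicator B (snd \<omega>) :: real)"
      using B(2) spM by (auto split: split_indicator)
    then show "(\<integral>\<omega>\<in>A. fst \<omega> $ j \<partial>M) = (\<integral>\<omega>\<in>A. h (snd \<omega>) $ j \<partial>M)"
      unfolding set_lebesgue_integral_def using CE B(1)
      unfolding is_cond_exp_x_given_z_def by simp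
  qed (use ints hjF in auto)
  have "(\<integral>\<omega>. w (snd \<omega>) * (fst \<omega> $ j) \<partial>M) =
        (\<integral>\<omega>. w (snd \<omega>) * real_cond_exp M F (\<lambda>\<omega>. fst \<omega> $ j) \<omega> \<partial>M)"
    using fms.real_cond_exp_intg(2)[OF wi wF fstjM] by simp
  also have "\<dots> = (\<integral>\<omega>. w (snd \<omega>) * (h (snd \<omega>) $ j) \<partial>M)"
    using cond_exp measurable_from_subalg[OF sub wF] measurable_from_subalg[OF sub hjF]
    by (intro integral_cong_AE) auto
  finally show ?thesis .
qed

section \<open>Quadratic forms and the smallest eigenvalue\<close>

lemma discriminant_le_of_nonneg_quadratic:
  fixes A B C :: real
  assumes nonneg: "\<And>s. 0 \<le> A + 2 * s * B + s^2 * C" and "0 \<le> A" "0 \<le> C"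
  shows "B^2 \<le> A * C"
proof (cases "C = 0")
  case True
  have "B = 0"
  proof (rule ccontr)
    assume "B \<noteq> 0"
    have "0 \<le> A + 2 * (- (A + 1) / (2 * B)) * B" using nonneg[of "- (A + 1) / (2 * B)"] True by simp
    also have "\<dots> = -1" using \<open>B \<noteq> 0\<close> by (simp add: field_simps)
    finally show False by simp
  qed
  then show ?thesis using assms by simp
next
  case False
  then have "0 < C" using \<open>0 \<le> C\<close> by simp
  have "0 \<le> A + 2 * (- B / C) * B + (- B / C)^2 * C" by (rule nonneg)
  also have "\<dots> = A - B^2 / C" using \<open>0 < C\<close> by (simp add: field_simps power2_eq_square)
  finally show ?thesis using \<open>0 < C\<close> by (simp add: field_simps)
qed

lemma inner_matrix_vector_mult_sym:
  fixes A :: "real^'n^'n"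
  assumes "\<forall>i j. A$i$j = A$j$i"
  shows "u \<bullet> (A *v w) = w \<bullet> (A *v u)"
proof -
  have "u \<bullet> (A *v w) = (\<Sum>i\<in>UNIV. \<Sum>j\<in>UNIV. u$i * A$i$j * w$j)"
    by (simp add: inner_vec_def matrix_vector_mult_def sum_distrib_left mult_ac)
  also have "\<dots> = (\<Sum>j\<in>UNIV. \<Sum>i\<in>UNIV. u$i * A$i$j * w$j)" by (rule sum.swap)
  also have "\<dots> = w \<bullet> (A *v u)"
    by (simp add: inner_vec_def matrix_vector_mult_def sum_distrib_left mult_ac assms)
  finally show ?thesis .
qed

text \<open>Eigenvectors for distinct eigenvalues are orthogonal, hence independent.\<close>
lemma finite_eigenvalues_sym:
  fixes A :: "real^'n^'n"
  assumes sym: "\<forall>i j. A$i$j = A$j$i"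
  shows "finite {l. \<exists>v. v \<noteq> 0 \<and> A *v v = l *\<^sub>R v}" (is "finite ?E")
proof -
  define ev where "ev l = (SOME v. v \<noteq> 0 \<and> A *v v = l *\<^sub>R v)" for l
  have ev: "ev l \<noteq> 0 \<and> A *v ev l = l *\<^sub>R ev l" if "l \<in> ?E" for l
    using that unfolding ev_def by simp (rule someI_ex, blast)
  have orth: "ev a \<bullet> ev b = 0" if "a \<in> ?E" "b \<in> ?E" "a \<noteq> b" for a b
  proof -
    have "a * (ev a \<bullet> ev b) = ev b \<bullet> (A *v ev a)" using ev[OF that(1)] by (simp add: inner_commute)
    also have "\<dots> = ev a \<bullet> (A *v ev b)" by (rule inner_matrix_vector_mult_sym[OF sym])
    also have "\<dots> = b * (ev a \<bullet> ev b)" using ev[OF that(2)] by simp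
    finally show ?thesis using that(3) by simp
  qed
  have "inj_on ev ?E"
    proof (rule inj_onI)
    fix a b assume ab: "a \<in> ?E" "b \<in> ?E" "ev a = ev b"
    show "a = b"
    proof (rule ccontr)
      assume "a \<noteq> b"
      then have "ev a \<bullet> ev a = 0" using orth[OF ab(1,2)] ab(3) by simp
      then show False using ev[OF ab(1)] by simp
    qed
  qed
  moreover have "independent (ev ` ?E)"
  proof (rule pairwise_orthogonal_independent)
    show "pairwise orthogonal (ev ` ?E)"
      using orth unfolding pairwise_def orthogonal_def by auto
    show "0 \<notin> ev ` ?E"
      using ev by (metis (no_types, lifting) imageE)
  qed
  ultimately show ?thesis
    using independent_imp_finite finite_imageD by blast
qed

lemma exists_Rayleigh_minimizer:
  fixes A :: "real^'n^'n"
  shows "\<exists>u. u \<bullet> u = 1 \<and> (\<forall>v. (u \<bullet> (A *v u)) * (v \<bullet> v) \<le> v \<bullet> (A *v v))"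
proof -
  define q where "q v = v \<bullet> (A *v v)" for v
  have "continuous_on (sphere 0 1) q"
    unfolding q_def by (intro continuous_intros linear_continuous_on) auto
  moreover have "sphere (0::real^'n) 1 \<noteq> {}"
    using vector_choose_size[of 1] by auto
  ultimately obtain u where u: "u \<in> sphere 0 1" "\<And>y. y \<in> sphere 0 1 \<Longrightarrow> q u \<le> q y"
    using continuous_attains_inf[OF compact_sphere] by blast
  have "q u * (v \<bullet> v) \<le> q v" for v
  proof (cases "v = 0")
    case True
    then show ?thesis by (simp add: q_def)
  next
    case False
    define w where "w = (1 / norm v) *\<^sub>R v"
    have "q u \<le> q w" using False by (intro u(2)) (simp add: w_def)
    then have "q u * (norm v)^2 \<le> q w * (norm v)^2" by (rule mult_right_mono) simp
    moreover have "q v = q w * (norm v)^2" "v \<bullet> v = (norm v)^2"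
      using False by (simp_all add: q_def w_def matrix_vector_mult_scaleR power2_eq_square
          dot_square_norm)
    ultimately show ?thesis by simp
  qed
  moreover have "u \<bullet> u = 1" using u(1) by (simp add: dot_square_norm)
  ultimately show ?thesis unfolding q_def by blast
qed

text \<open>The form (v, w) \<mapsto> v \<bullet> A w - m v \<bullet> w is positive semidefinite and vanishes at u, so by
  Cauchy-Schwarz u is orthogonal under it to everything, in particular to A u - m u.\<close>
lemma eigenvector_of_Rayleigh_minimizer:
  fixes A :: "real^'n^'n"
  assumes sym: "\<forall>i j. A$i$j = A$j$i"
    and lower: "\<And>v. m * (v \<bullet> v) \<le> v \<bullet> (A *v v)"
    and attained: "u \<bullet> (A *v u) = m * (u \<bullet> u)"
  shows "A *v u = m *\<^sub>R u"
proof -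
  define B where "B v w = v \<bullet> (A *v w) - m * (v \<bullet> w)" for v w
  define w where "w = A *v u - m *\<^sub>R u"
  have Buw: "B u w = w \<bullet> w"
  proof -
    have "w \<bullet> w = w \<bullet> (A *v u) - m * (w \<bullet> u)"
      using inner_diff_right[of w "A *v u" "m *\<^sub>R u"] unfolding w_def[symmetric] by simp
    moreover have "u \<bullet> (A *v w) = w \<bullet> (A *v u)" by (rule inner_matrix_vector_mult_sym[OF sym])
    moreover have "u \<bullet> w = w \<bullet> u" by (rule inner_commute)
    ultimately show ?thesis by (simp add: B_def)
  qed
  have B_expand: "B (u + s *\<^sub>R w) (u + s *\<^sub>R w) = B u u + 2 * s * B u w + s^2 * B w w" for s
  proof -
    have "(u + s *\<^sub>R w) \<bullet> (A *v (u + s *\<^sub>R w))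
        = u \<bullet> (A *v u) + s * (u \<bullet> (A *v w)) + s * (w \<bullet> (A *v u)) + s^2 * (w \<bullet> (A *v w))"
      by (simp add: matrix_vector_right_distrib matrix_vector_mult_scaleR inner_add
          power2_eq_square algebra_simps)
    moreover have "(u + s *\<^sub>R w) \<bullet> (u + s *\<^sub>R w) = u \<bullet> u + 2 * s * (u \<bullet> w) + s^2 * (w \<bullet> w)"
      by (simp add: inner_add inner_commute power2_eq_square algebra_simps)
    moreover have "w \<bullet> (A *v u) = u \<bullet> (A *v w)" by (rule inner_matrix_vector_mult_sym[OF sym])
    ultimately show ?thesis
      unfolding B_def by (simp add: algebra_simps)
  qed
  have "(B u w)^2 \<le> B u u * B w w"
  proof (rule discriminant_le_of_nonneg_quadratic)
    show "0 \<le> B u u + 2 * s * B u w + s^2 * B w w" for s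
      using lower[of "u + s *\<^sub>R w"] B_expand[of s] unfolding B_def by linarith
    show "0 \<le> B u u" "0 \<le> B w w"
      using lower[of u] lower[of w] unfolding B_def by linarith+
  qed
  moreover have "B u u = 0" using attained by (simp add: B_def)
  ultimately have "w \<bullet> w = 0" using Buw by simp
  then show ?thesis by (simp add: w_def)
qed

lemma min_eigenvalue_le_Rayleigh:
  fixes A :: "real^'n^'n"
  assumes sym: "\<forall>i j. A$i$j = A$j$i"
  shows "min_eigenvalue A * (v \<bullet> v) \<le> v \<bullet> (A *v v)"
proof -
  obtain u where u: "u \<bullet> u = 1" and lower: "\<And>v. (u \<bullet> (A *v u)) * (v \<bullet> v) \<le> v \<bullet> (A *v v)"
    using exists_Rayleigh_minimizer by blast
  have "A *v u = (u \<bullet> (A *v u)) *\<^sub>R u"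
    by (rule eigenvector_of_Rayleigh_minimizer[OF sym lower]) (simp add: u)
  moreover have "u \<noteq> 0" using u by auto
  ultimately have "min_eigenvalue A \<le> u \<bullet> (A *v u)"
    unfolding min_eigenvalue_def using finite_eigenvalues_sym[OF sym] by (intro Min_le) blast+
  then have "min_eigenvalue A * (v \<bullet> v) \<le> (u \<bullet> (A *v u)) * (v \<bullet> v)"
    by (rule mult_right_mono) simp
  then show ?thesis using lower[of v] by linarith
qed

section \<open>Semi-inner products and l1 norms\<close>

lemma L2_subspace_add: "L2_subspace Qz G \<Longrightarrow> f \<in> G \<Longrightarrow> g \<in> G \<Longrightarrow> (\<lambda>z. f z + g z) \<in> G"
  unfolding L2_subspace_def by blast

lemma L2_subspace_scale: "L2_subspace Qz G \<Longrightarrow> f \<in> G \<Longrightarrow> (\<lambda>z. c * f z) \<in> G"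
  unfolding L2_subspace_def by blast

lemma L2_subspace_diff: "L2_subspace Qz G \<Longrightarrow> f \<in> G \<Longrightarrow> g \<in> G \<Longrightarrow> (\<lambda>z. f z - g z) \<in> G"
  using L2_subspace_add[of Qz G f "\<lambda>z. (-1) * g z"] L2_subspace_scale[of Qz G g "-1"] by simp

context
  fixes G :: "('a \<Rightarrow> real) set" and J :: "('a \<Rightarrow> real) \<Rightarrow> ('a \<Rightarrow> real) \<Rightarrow> real"
  assumes SI: "semi_inner_on G J"
begin

lemma J_sym: "f \<in> G \<Longrightarrow> g \<in> G \<Longrightarrow> J f g = J g f"
  using SI unfolding semi_inner_on_def by blast

lemma J_add_left: "f \<in> G \<Longrightarrow> g \<in> G \<Longrightarrow> k \<in> G \<Longrightarrow> J (\<lambda>z. f z + g z) k = J f k + J g k"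
  using SI unfolding semi_inner_on_def by blast

lemma J_scale_left: "f \<in> G \<Longrightarrow> g \<in> G \<Longrightarrow> J (\<lambda>z. c * f z) g = c * J f g"
  using SI unfolding semi_inner_on_def by blast

lemma J_nonneg: "f \<in> G \<Longrightarrow> 0 \<le> J f f"
  using SI unfolding semi_inner_on_def by blast

lemma seminormJ_nonneg: "f \<in> G \<Longrightarrow> 0 \<le> seminormJ J f"
  unfolding seminormJ_def by (simp add: J_nonneg)

lemma seminormJ_sq: "f \<in> G \<Longrightarrow> (seminormJ J f)^2 = J f f"
  unfolding seminormJ_def by (simp add: J_nonneg)

context
  fixes Qz assumes GS: "L2_subspace Qz G"
begin

lemma J_scale_right:
  assumes f: "f \<in> G" and g: "g \<in> G"
  shows "J f (\<lambda>z. c * g z) = c * J f g"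
proof -
  have "(\<lambda>z. c * g z) \<in> G" by (rule L2_subspace_scale[OF GS g])
  then show ?thesis using J_sym[OF f] J_scale_left[OF g f] J_sym[OF f g] by simp
qed

lemma J_add_self:
  assumes f: "f \<in> G" and g: "g \<in> G"
  shows "J (\<lambda>z. f z + g z) (\<lambda>z. f z + g z) = J f f + 2 * J f g + J g g"
proof -
  have fg: "(\<lambda>z. f z + g z) \<in> G" by (rule L2_subspace_add[OF GS f g])
  have "J (\<lambda>z. f z + g z) (\<lambda>z. f z + g z) = J f (\<lambda>z. f z + g z) + J g (\<lambda>z. f z + g z)"
    by (rule J_add_left[OF f g fg])
  also have "\<dots> = (J f f + J g f) + (J f g + J g g)"
    using J_sym[OF f fg] J_sym[OF g fg] J_add_left[OF f g f] J_add_left[OF f g g] by simp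
  finally show ?thesis using J_sym[OF f g] by simp
qed

lemma J_scale_self:
  assumes f: "f \<in> G"
  shows "J (\<lambda>z. c * f z) (\<lambda>z. c * f z) = c^2 * J f f"
  using J_scale_left[OF f L2_subspace_scale[OF GS f]] J_scale_right[OF f f]
  by (simp add: power2_eq_square)

lemma J_Cauchy_Schwarz:
  assumes f: "f \<in> G" and g: "g \<in> G"
  shows "\<bar>J f g\<bar> \<le> seminormJ J f * seminormJ J g"
proof -
  have "(J f g)^2 \<le> J f f * J g g"
  proof (rule discriminant_le_of_nonneg_quadratic)
    fix s
    have sg: "(\<lambda>z. s * g z) \<in> G" by (rule L2_subspace_scale[OF GS g])
    have "0 \<le> J (\<lambda>z. f z + s * g z) (\<lambda>z. f z + s * g z)"
      by (rule J_nonneg[OF L2_subspace_add[OF GS f sg]])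
    then show "0 \<le> J f f + 2 * s * J f g + s^2 * J g g"
      using J_add_self[OF f sg] J_scale_right[OF f g] J_scale_self[OF g] by simp
  qed (use J_nonneg f g in auto)
  then have "sqrt ((J f g)^2) \<le> sqrt (J f f * J g g)" by (rule real_sqrt_le_mono)
  then show ?thesis unfolding seminormJ_def by (simp add: real_sqrt_mult)
qed

lemma seminormJ_add_le:
  assumes f: "f \<in> G" and g: "g \<in> G"
  shows "seminormJ J (\<lambda>z. f z + g z) \<le> seminormJ J f + seminormJ J g"
proof -
  have "(seminormJ J (\<lambda>z. f z + g z))^2 = J f f + 2 * J f g + J g g"
    using seminormJ_sq[OF L2_subspace_add[OF GS f g]] J_add_self[OF f g] by simp
  also have "\<dots> \<le> (seminormJ J f + seminormJ J g)^2"
    using J_Cauchy_Schwarz[OF f g] seminormJ_sq[OF f] seminormJ_sq[OF g]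
    by (simp add: power2_sum)
  finally show ?thesis
    by (rule power2_le_imp_le) (simp add: seminormJ_nonneg f g)
qed

lemma seminormJ_scale: "f \<in> G \<Longrightarrow> seminormJ J (\<lambda>z. c * f z) = \<bar>c\<bar> * seminormJ J f"
  unfolding seminormJ_def by (simp add: J_scale_self real_sqrt_mult)

end

end

definition l1norm_on :: "'p set \<Rightarrow> real^'p \<Rightarrow> real" where
  "l1norm_on S b = (\<Sum>j\<in>S. \<bar>b $ j\<bar>)"

lemma l1norm_nonneg: "0 \<le> l1norm b"
  by (simp add: l1norm_def sum_nonneg)

lemma l1norm_scale: "0 \<le> t \<Longrightarrow> l1norm (t *\<^sub>R b) = t * l1norm b"
  by (simp add: l1norm_def abs_mult sum_distrib_left)

lemma l1norm_convex:
  assumes "0 \<le> t" "t \<le> 1"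
  shows "l1norm (b0 + t *\<^sub>R (b1 - b0)) \<le> (1 - t) * l1norm b0 + t * l1norm b1"
proof -
  have "l1norm (b0 + t *\<^sub>R (b1 - b0)) = (\<Sum>j\<in>UNIV. \<bar>(1 - t) * b0 $ j + t * b1 $ j\<bar>)"
    unfolding l1norm_def by (simp add: algebra_simps)
  also have "\<dots> \<le> (\<Sum>j\<in>UNIV. (1 - t) * \<bar>b0 $ j\<bar> + t * \<bar>b1 $ j\<bar>)"
  proof (rule sum_mono)
    fix j
    show "\<bar>(1 - t) * b0 $ j + t * b1 $ j\<bar> \<le> (1 - t) * \<bar>b0 $ j\<bar> + t * \<bar>b1 $ j\<bar>"
      using abs_triangle_ineq[of "(1 - t) * b0 $ j" "t * b1 $ j"] assms by (simp add: abs_mult)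
  qed
  also have "\<dots> = (1 - t) * l1norm b0 + t * l1norm b1"
    by (simp add: l1norm_def sum.distrib sum_distrib_left)
  finally show ?thesis .
qed

lemma l1norm_on_eq_sum_UNIV: "l1norm_on S b = (\<Sum>j\<in>UNIV. if j \<in> S then \<bar>b $ j\<bar> else 0)"
  unfolding l1norm_on_def using sum.inter_filter[of UNIV "\<lambda>j. \<bar>b $ j\<bar>" "\<lambda>j. j \<in> S"] by simp

text \<open>The triangle inequality off the support S of b0 and its reverse on S.\<close>
lemma l1norm_add_ge:
  "l1norm b0 + l1norm b - 2 * l1norm_on {j. b0 $ j \<noteq> 0} b \<le> l1norm (b0 + b)"
proof -
  have "l1norm b0 + l1norm b - 2 * l1norm_on {j. b0 $ j \<noteq> 0} b
      = (\<Sum>j\<in>UNIV. \<bar>b0 $ j\<bar> + \<bar>b $ j\<bar> - 2 * (if b0 $ j \<noteq> 0 then \<bar>b $ j\<bar> else 0))"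
    by (simp add: l1norm_def l1norm_on_eq_sum_UNIV sum.distrib sum_subtractf sum_distrib_left)
  also have "\<dots> \<le> (\<Sum>j\<in>UNIV. \<bar>(b0 + b) $ j\<bar>)"
    by (rule sum_mono) auto
  finally show ?thesis by (simp add: l1norm_def)
qed

lemma l1norm_on_sq_le: "(l1norm_on S b)^2 \<le> real (card S) * (b \<bullet> b)"
proof -
  have "(l1norm_on S b)^2 = (\<Sum>j\<in>UNIV. (if j \<in> S then 1 else 0) * \<bar>b $ j\<bar>)^2"
    unfolding l1norm_on_eq_sum_UNIV by (intro arg_cong[where f="\<lambda>x. x^2"] sum.cong) auto
  also have "\<dots> \<le> (\<Sum>j\<in>UNIV. (if j \<in> S then 1 else 0::real)^2) * (\<Sum>j\<in>UNIV. \<bar>b $ j\<bar>^2)"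
    by (rule Cauchy_Schwarz_ineq_sum)
  also have "(\<Sum>j\<in>UNIV. (if j \<in> S then 1 else 0::real)^2) = real (card S)"
  proof -
    have "(\<Sum>j\<in>UNIV. (if j \<in> S then 1 else 0::real)^2) = (\<Sum>j\<in>UNIV. if j \<in> S then 1 else 0)"
      by (rule sum.cong) auto
    then show ?thesis using sum.inter_filter[of UNIV "\<lambda>j. 1::real" "\<lambda>j. j \<in> S"] by simp
  qed
  also have "(\<Sum>j\<in>UNIV. \<bar>b $ j\<bar>^2) = b \<bullet> b"
    by (simp add: inner_vec_def power2_eq_square)
  finally show ?thesis .
qed

section \<open>Compatibility\<close>

lemma L2_subspace_distr_borel_measurable:
  "L2_subspace (distr N borel f) G \<Longrightarrow> g \<in> G \<Longrightarrow> g \<in> borel_measurable borel"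
  using measurable_cong_sets[of "distr N borel f" borel borel borel]
  unfolding L2_subspace_def by auto

context
  fixes M :: "((real^'p) \<times> (real^'d)) measure"
  assumes SM: "sets M = sets borel"
begin

lemma measurable_snd_M: "snd \<in> measurable M borel"
  using measurable_snd_borel_prod measurable_cong_sets[OF SM refl] by blast

lemma square_integrable_comp_snd:
  assumes GS: "L2_subspace (distr M borel snd) G" and g: "g \<in> G"
  shows "square_integrable M (\<lambda>\<omega>. g (snd \<omega>))"
proof -
  have gb: "g \<in> borel_measurable borel"
    by (rule L2_subspace_distr_borel_measurable[OF GS g])
  moreover have "integrable (distr M borel snd) (\<lambda>z. (g z)^2)"
    using GS g unfolding L2_subspace_def by auto
  ultimately show ?thesis
    unfolding square_integrable_def
    using measurable_compose[OF measurable_snd_M gb]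
      integrable_distr_eq[OF measurable_snd_M, of "\<lambda>z. (g z)^2"]
    by auto
qed

lemma square_integrable_x_component:
  assumes "\<forall>j. integrable M (\<lambda>\<omega>. (fst \<omega> $ j)^2)"
  shows "square_integrable M (\<lambda>\<omega>. fst \<omega> $ j)"
proof -
  have "(\<lambda>\<omega>. fst \<omega> $ j) \<in> borel_measurable (borel :: ((real^'p) \<times> (real^'d)) measure)"
    by (intro borel_measurable_continuous_onI continuous_intros)
  then show ?thesis
    unfolding square_integrable_def using assms measurable_cong_sets[OF SM refl] by blast
qed

context
  fixes h :: "real^'d \<Rightarrow> real^'p"
  assumes PS: "prob_space M" and CE: "is_cond_exp_x_given_z M h"
begin

lemma square_integrable_h_component:
  assumes "\<forall>i j. integrable M (\<lambda>\<omega>. h (snd \<omega>) $ i * h (snd \<omega>) $ j)"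
  shows "square_integrable M (\<lambda>\<omega>. h (snd \<omega>) $ j)"
proof -
  have "(\<lambda>z. h z $ j) \<in> borel_measurable borel"
    using CE unfolding is_cond_exp_x_given_z_def by auto
  then show ?thesis
    unfolding square_integrable_def using assms measurable_compose[OF measurable_snd_M]
    by (auto simp: power2_eq_square)
qed

lemma integral_residual_mult_eq_0:
  assumes L2x: "\<forall>j. integrable M (\<lambda>\<omega>. (fst \<omega> $ j)^2)"
    and hh: "\<forall>i j. integrable M (\<lambda>\<omega>. h (snd \<omega>) $ i * h (snd \<omega>) $ j)"
    and wb: "w \<in> borel_measurable borel" and w: "square_integrable M (\<lambda>\<omega>. w (snd \<omega>))"
  shows "(\<integral>\<omega>. (fst \<omega> $ j - h (snd \<omega>) $ j) * w (snd \<omega>) \<partial>M) = 0"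
proof -
  have ix: "integrable M (\<lambda>\<omega>. w (snd \<omega>) * (fst \<omega> $ j))"
    and ih: "integrable M (\<lambda>\<omega>. w (snd \<omega>) * (h (snd \<omega>) $ j))"
    using integrable_mult_square_integrable[OF w] square_integrable_x_component[OF L2x]
      square_integrable_h_component[OF hh] by blast+
  have "(\<integral>\<omega>. (fst \<omega> $ j - h (snd \<omega>) $ j) * w (snd \<omega>) \<partial>M)
      = (\<integral>\<omega>. w (snd \<omega>) * (fst \<omega> $ j) \<partial>M) - (\<integral>\<omega>. w (snd \<omega>) * (h (snd \<omega>) $ j) \<partial>M)"
    using ix ih by (simp add: algebra_simps)
  also have "\<dots> = 0"
    using integral_mult_cond_exp_x_given_z[OF PS SM CE wb ix] by simp
  finally show ?thesis .
qed

lemma integral_sq_residual_eq_quadratic_form: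
  assumes L2x: "\<forall>j. integrable M (\<lambda>\<omega>. (fst \<omega> $ j)^2)"
    and hh: "\<forall>i j. integrable M (\<lambda>\<omega>. h (snd \<omega>) $ i * h (snd \<omega>) $ j)"
  shows "(\<integral>\<omega>. (\<Sum>j\<in>UNIV. b $ j * (fst \<omega> $ j - h (snd \<omega>) $ j))^2 \<partial>M)
    = b \<bullet> (cov_xtilde M h *v b)"
proof -
  define D where "D j \<omega> = fst \<omega> $ j - h (snd \<omega>) $ j" for j and \<omega> :: "(real^'p) \<times> (real^'d)"
  have LD: "square_integrable M (D j)" for j
    unfolding D_def using square_integrable_x_component[OF L2x] square_integrable_h_component[OF hh]
    by (rule square_integrable_diff)
  have "(\<integral>\<omega>. (\<Sum>j\<in>UNIV. b $ j * D j \<omega>)^2 \<partial>M)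
      = (\<integral>\<omega>. (\<Sum>i\<in>UNIV. \<Sum>j\<in>UNIV. b$i * (b$j * (D i \<omega> * D j \<omega>))) \<partial>M)"
    by (simp add: power2_eq_square sum_product algebra_simps)
  also have "\<dots> = (\<Sum>i\<in>UNIV. \<Sum>j\<in>UNIV. b$i * (b$j * cov_xtilde M h $ i $ j))"
    using integrable_mult_square_integrable[OF LD LD] by (simp add: cov_xtilde_def D_def)
  also have "\<dots> = b \<bullet> (cov_xtilde M h *v b)"
    by (simp add: inner_vec_def matrix_vector_mult_def sum_distrib_left algebra_simps)
  finally show ?thesis unfolding D_def .
qed

text \<open>Splitting x \<bullet> b + g(z) = (x - h(z)) \<bullet> b + (h(z) \<bullet> b + g(z)) into orthogonal parts, the
  second part only increases the second moment.\<close>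
lemma quadratic_form_cov_le_pop_sq:
  assumes L2x: "\<forall>j. integrable M (\<lambda>\<omega>. (fst \<omega> $ j)^2)"
    and hh: "\<forall>i j. integrable M (\<lambda>\<omega>. h (snd \<omega>) $ i * h (snd \<omega>) $ j)"
    and GS: "L2_subspace (distr M borel snd) G" and g: "g \<in> G"
  shows "b \<bullet> (cov_xtilde M h *v b) \<le> pop_sq M b g"
proof -
  define D where "D j \<omega> = fst \<omega> $ j - h (snd \<omega>) $ j" for j and \<omega> :: "(real^'p) \<times> (real^'d)"
  define U where "U \<omega> = (\<Sum>j\<in>UNIV. b $ j * D j \<omega>)" for \<omega>
  define w where "w z = (\<Sum>j\<in>UNIV. b $ j * h z $ j) + g z" for z
  have LD: "square_integrable M (D j)" for j
    unfolding D_def using square_integrable_x_component[OF L2x] square_integrable_h_component[OF hh]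
    by (rule square_integrable_diff)
  have LU: "square_integrable M U"
    unfolding U_def using LD by (intro square_integrable_sum square_integrable_scale) auto
  have "(\<lambda>z. h z $ j) \<in> borel_measurable borel" for j
    using CE unfolding is_cond_exp_x_given_z_def by auto
  then have wb: "w \<in> borel_measurable borel"
    unfolding w_def using L2_subspace_distr_borel_measurable[OF GS g] by measurable
  have Lw: "square_integrable M (\<lambda>\<omega>. w (snd \<omega>))"
    unfolding w_def using square_integrable_h_component[OF hh] square_integrable_comp_snd[OF GS g]
    by (intro square_integrable_add square_integrable_sum square_integrable_scale) auto
  have split: "fst \<omega> \<bullet> b + g (snd \<omega>) = U \<omega> + w (snd \<omega>)" for \<omega>
    by (simp add: U_def w_def D_def inner_vec_def algebra_simps sum.distrib sum_subtractf)
  have cross: "(\<integral>\<omega>. U \<omega> * w (snd \<omega>) \<partial>M) = 0"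
  proof -
    have "(\<integral>\<omega>. U \<omega> * w (snd \<omega>) \<partial>M)
        = (\<Sum>j\<in>UNIV. b $ j * (\<integral>\<omega>. D j \<omega> * w (snd \<omega>) \<partial>M))"
      unfolding U_def sum_distrib_right
      using integrable_mult_square_integrable[OF LD Lw] by (simp add: mult.assoc)
    also have "\<dots> = 0"
      unfolding D_def using integral_residual_mult_eq_0[OF L2x hh wb Lw] by simp
    finally show ?thesis .
  qed
  have U2: "(\<integral>\<omega>. (U \<omega>)^2 \<partial>M) = b \<bullet> (cov_xtilde M h *v b)"
    unfolding U_def D_def by (rule integral_sq_residual_eq_quadratic_form[OF L2x hh])
  have "b \<bullet> (cov_xtilde M h *v b) = (\<integral>\<omega>. (U \<omega>)^2 + 2 * (U \<omega> * w (snd \<omega>)) \<partial>M)"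
    using LU integrable_mult_square_integrable[OF LU Lw] cross U2
    unfolding square_integrable_def by simp
  also have "\<dots> \<le> (\<integral>\<omega>. (U \<omega> + w (snd \<omega>))^2 \<partial>M)"
    using LU integrable_mult_square_integrable[OF LU Lw] square_integrable_add[OF LU Lw]
    unfolding square_integrable_def by (intro integral_mono) (auto simp: power2_sum)
  also have "\<dots> = pop_sq M b g"
    unfolding pop_sq_def split ..
  finally show ?thesis .
qed

lemma min_eigenvalue_cov_le_pop_sq:
  assumes "\<forall>j. integrable M (\<lambda>\<omega>. (fst \<omega> $ j)^2)"
    and "\<forall>i j. integrable M (\<lambda>\<omega>. h (snd \<omega>) $ i * h (snd \<omega>) $ j)"
    and "L2_subspace (distr M borel snd) G" and "g \<in> G"
  shows "min_eigenvalue (cov_xtilde M h) * (b \<bullet> b) \<le> pop_sq M b g"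
proof -
  have "\<forall>i j. cov_xtilde M h $ i $ j = cov_xtilde M h $ j $ i"
    by (simp add: cov_xtilde_def mult.commute)
  then show ?thesis
    using min_eigenvalue_le_Rayleigh quadratic_form_cov_le_pop_sq[OF assms] order_trans by blast
qed

end

end

section \<open>The normalised error and the penalised criterion\<close>

lemma pop_sq_scale: "pop_sq M (t *\<^sub>R b) (\<lambda>z. t * g z) = t^2 * pop_sq M b g"
proof -
  have "(\<lambda>\<omega>. (fst \<omega> \<bullet> (t *\<^sub>R b) + t * g (snd \<omega>))^2) = (\<lambda>\<omega>. t^2 * (fst \<omega> \<bullet> b + g (snd \<omega>))^2)"
    by (rule ext) (simp add: power2_eq_square algebra_simps)
  then show ?thesis unfolding pop_sq_def by simp
qed

lemma pop_sq_nonneg: "0 \<le> pop_sq M b g"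
  unfolding pop_sq_def by simp

lemma mean_square_convex:
  fixes r0 r1 :: "nat \<Rightarrow> real"
  assumes "0 \<le> t" "t \<le> 1"
  shows "(1 / real n) * (\<Sum>i<n. ((1 - t) * r0 i + t * r1 i)^2)
    \<le> (1 - t) * ((1 / real n) * (\<Sum>i<n. (r0 i)^2)) + t * ((1 / real n) * (\<Sum>i<n. (r1 i)^2))"
proof -
  have "(\<Sum>i<n. ((1 - t) * r0 i + t * r1 i)^2) \<le> (\<Sum>i<n. (1 - t) * (r0 i)^2 + t * (r1 i)^2)"
  proof (rule sum_mono)
    fix i
    have "(1 - t) * (r0 i)^2 + t * (r1 i)^2 - ((1 - t) * r0 i + t * r1 i)^2
        = t * (1 - t) * (r0 i - r1 i)^2"
      by (simp add: power2_eq_square algebra_simps)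
    moreover have "0 \<le> t * (1 - t) * (r0 i - r1 i)^2" using assms by simp
    ultimately show "((1 - t) * r0 i + t * r1 i)^2 \<le> (1 - t) * (r0 i)^2 + t * (r1 i)^2"
      by linarith
  qed
  also have "\<dots> = (1 - t) * (\<Sum>i<n. (r0 i)^2) + t * (\<Sum>i<n. (r1 i)^2)"
    by (simp add: sum.distrib sum_distrib_left)
  finally have "(1 / real n) * (\<Sum>i<n. ((1 - t) * r0 i + t * r1 i)^2)
      \<le> (1 / real n) * ((1 - t) * (\<Sum>i<n. (r0 i)^2) + t * (\<Sum>i<n. (r1 i)^2))"
    by (rule mult_left_mono) simp
  then show ?thesis by (simp only: distrib_left mult.left_commute)
qed

lemma tau_nonneg:
  assumes "0 \<le> lam" "0 < R" "0 < delta0"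
  shows "0 \<le> tau M J lam mu delta0 R b g"
  unfolding tau_def using assms l1norm_nonneg[of b] pop_sq_nonneg[of M b g] by simp

context
  fixes G :: "(real^'d \<Rightarrow> real) set"
    and J :: "(real^'d \<Rightarrow> real) \<Rightarrow> (real^'d \<Rightarrow> real) \<Rightarrow> real" and Qz
  assumes SI: "semi_inner_on G J" and GS: "L2_subspace Qz G"
begin

lemma tau_scale:
  assumes "0 \<le> t" "g \<in> G"
  shows "tau M J lam mu delta0 R (t *\<^sub>R b) (\<lambda>z. t * g z) = t * tau M J lam mu delta0 R b g"
proof -
  have "pop_sq M (t *\<^sub>R b) (\<lambda>z. t * g z) + mu^2 * (seminormJ J (\<lambda>z. t * g z))^2
      = t^2 * (pop_sq M b g + mu^2 * (seminormJ J g)^2)"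
    using seminormJ_scale[OF SI GS assms(2)] assms(1)
    by (simp add: pop_sq_scale power_mult_distrib algebra_simps)
  then have "sqrt (pop_sq M (t *\<^sub>R b) (\<lambda>z. t * g z) + mu^2 * (seminormJ J (\<lambda>z. t * g z))^2)
      = t * sqrt (pop_sq M b g + mu^2 * (seminormJ J g)^2)"
    using assms(1) by (simp add: real_sqrt_mult)
  then show ?thesis
    unfolding tau_def using assms(1) by (simp add: l1norm_scale algebra_simps)
qed

lemma mu_seminormJ_le_tau:
  assumes "0 \<le> lam" "0 \<le> mu" "0 < R" "0 < delta0" "g \<in> G"
  shows "mu * seminormJ J g \<le> tau M J lam mu delta0 R b g"
proof -
  have "0 \<le> lam * l1norm b / (R * sqrt (delta0 / 2))"
    using assms l1norm_nonneg[of b] by simp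
  moreover have "sqrt ((mu * seminormJ J g)^2) \<le> sqrt (pop_sq M b g + mu^2 * (seminormJ J g)^2)"
    using pop_sq_nonneg[of M b g] by (intro real_sqrt_le_mono) (simp add: power_mult_distrib)
  ultimately show ?thesis
    unfolding tau_def using assms seminormJ_nonneg[OF SI assms(5)] by simp
qed

lemma seminormJ_sq_convex:
  assumes "0 \<le> t" "t \<le> 1" "g0 \<in> G" "g1 \<in> G"
  shows "(seminormJ J (\<lambda>z. g0 z + t * (g1 z - g0 z)))^2
    \<le> (1 - t) * (seminormJ J g0)^2 + t * (seminormJ J g1)^2"
proof -
  define d where "d z = g1 z - g0 z" for z
  have d: "d \<in> G" unfolding d_def by (rule L2_subspace_diff[OF GS assms(4,3)])
  have td: "(\<lambda>z. t * d z) \<in> G" by (rule L2_subspace_scale[OF GS d])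
  have "g1 = (\<lambda>z. g0 z + d z)" by (simp add: d_def)
  then have "(seminormJ J g1)^2 = J g0 g0 + 2 * J g0 d + J d d"
    using seminormJ_sq[OF SI assms(4)] J_add_self[OF SI GS assms(3) d] by simp
  moreover have "(seminormJ J (\<lambda>z. g0 z + t * d z))^2 = J g0 g0 + 2 * t * J g0 d + t^2 * J d d"
    using seminormJ_sq[OF SI L2_subspace_add[OF GS assms(3) td]] J_add_self[OF SI GS assms(3) td]
      J_scale_right[OF SI GS assms(3) d] J_scale_self[OF SI GS d] by simp
  moreover have "t^2 * J d d \<le> t * J d d"
  proof (rule mult_right_mono)
    show "t^2 \<le> t" using assms(1,2) by (simp add: power2_eq_square mult_left_le_one_le)
  qed (rule J_nonneg[OF SI d])
  ultimately show ?thesis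
    using seminormJ_sq[OF SI assms(3)] by (simp add: d_def algebra_simps)
qed

lemma crit_convex:
  assumes "0 \<le> t" "t \<le> 1" "0 \<le> lam" "g0 \<in> G" "g1 \<in> G"
  shows "crit J lam mu n Y xs zs (b0 + t *\<^sub>R (b1 - b0)) (\<lambda>z. g0 z + t * (g1 z - g0 z))
    \<le> (1 - t) * crit J lam mu n Y xs zs b0 g0 + t * crit J lam mu n Y xs zs b1 g1"
proof -
  define r where "r b g i = Y i - xs i \<bullet> b - g (zs i)" for b g i
  define bt where "bt = b0 + t *\<^sub>R (b1 - b0)"
  define gt where "gt = (\<lambda>z. g0 z + t * (g1 z - g0 z))"
  have crit_r: "crit J lam mu n Y xs zs b g
      = (1 / real n) * (\<Sum>i<n. (r b g i)^2) + lam * l1norm b + mu^2 * (seminormJ J g)^2" for b g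
    by (simp add: crit_def r_def)
  have "r bt gt i = (1 - t) * r b0 g0 i + t * r b1 g1 i" for i
    by (simp add: r_def bt_def gt_def inner_add_right inner_diff_right algebra_simps)
  then have "(1 / real n) * (\<Sum>i<n. (r bt gt i)^2)
      \<le> (1 - t) * ((1 / real n) * (\<Sum>i<n. (r b0 g0 i)^2)) + t * ((1 / real n) * (\<Sum>i<n. (r b1 g1 i)^2))"
    using mean_square_convex[OF assms(1,2)] by simp
  moreover have "lam * l1norm bt \<le> (1 - t) * (lam * l1norm b0) + t * (lam * l1norm b1)"
    using mult_left_mono[OF l1norm_convex[OF assms(1,2)] assms(3)] by (simp add: bt_def algebra_simps)
  moreover have "mu^2 * (seminormJ J gt)^2
      \<le> (1 - t) * (mu^2 * (seminormJ J g0)^2) + t * (mu^2 * (seminormJ J g1)^2)"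
    using mult_left_mono[OF seminormJ_sq_convex[OF assms(1,2,4,5)], of "mu^2"]
    unfolding gt_def by (simp only: zero_le_power2 distrib_left mult.left_commute simp_thms)
  ultimately show ?thesis
    unfolding bt_def[symmetric] gt_def[symmetric] crit_r distrib_left by linarith
qed

lemma crit_expand:
  assumes Y: "\<forall>i. Y i = xs i \<bullet> beta0 + g0 (zs i) + e i" and "g0 \<in> G" "d \<in> G"
  shows "crit J lam mu n Y xs zs (beta0 + b) (\<lambda>z. g0 z + d z)
    = crit J lam mu n Y xs zs beta0 g0 + emp_sq n xs zs b d
      - 2 * ((\<Sum>i<n. e i * (xs i \<bullet> b + d (zs i))) / real n)
      + lam * (l1norm (beta0 + b) - l1norm beta0) + mu^2 * (2 * J g0 d + J d d)"
proof -
  have sq: "(Y i - xs i \<bullet> (beta0 + b) - (g0 (zs i) + d (zs i)))^2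
      = (Y i - xs i \<bullet> beta0 - g0 (zs i))^2 + (xs i \<bullet> b + d (zs i))^2
        - 2 * (e i * (xs i \<bullet> b + d (zs i)))" for i
    using Y by (simp add: inner_add_right power2_eq_square algebra_simps)
  have sums: "(\<Sum>i<n. (Y i - xs i \<bullet> (beta0 + b) - (g0 (zs i) + d (zs i)))^2)
      = (\<Sum>i<n. (Y i - xs i \<bullet> beta0 - g0 (zs i))^2) + (\<Sum>i<n. (xs i \<bullet> b + d (zs i))^2)
        - 2 * (\<Sum>i<n. e i * (xs i \<bullet> b + d (zs i)))"
    by (simp only: sq sum.distrib sum_subtractf flip: sum_distrib_left)
  have seminorm: "(seminormJ J (\<lambda>z. g0 z + d z))^2 = (seminormJ J g0)^2 + (2 * J g0 d + J d d)"
    using seminormJ_sq[OF SI assms(2)] seminormJ_sq[OF SI L2_subspace_add[OF GS assms(2,3)]]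
      J_add_self[OF SI GS assms(2,3)] by simp
  show ?thesis
    unfolding crit_def emp_sq_def sums seminorm by (simp add: ring_distribs)
qed

end

section \<open>Consistency\<close>

text \<open>Completing the square in A: the leftover coefficient 1/2 - c (35 sqrt 2/8 + 3/2) is nonnegative
  because c \<le> 1/sqrt 253 < 1/15.9.\<close>
lemma tau_le_half_of_quadratic_bound:
  fixes c A L R :: real
  assumes c0: "0 < c" and c2: "c^2 \<le> 1/253" and R0: "0 < R"
    and quad: "A^2 + L \<le> 3 * c^2 * R^2 + (1 + sqrt 2) * c * R * A"
  shows "L / (R * (c / sqrt 2)) + A \<le> R / 2"
proof -
  define s2 where "s2 = sqrt (2::real)"
  have s2sq: "s2^2 = 2" by (simp add: s2_def)
  have s2b: "1.41 \<le> s2" "s2 \<le> 1.42" unfolding s2_def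
    by (rule real_le_rsqrt, simp add: power2_eq_square) (rule real_le_lsqrt, simp_all add: power2_eq_square)
  have cb: "c \<le> 1 / 15.9"
  proof (rule ccontr)
    assume "\<not> c \<le> 1 / 15.9"
    then have "(1 / 15.9)^2 < c^2" by (intro power_strict_mono) auto
    then show False using c2 by (simp add: power2_eq_square)
  qed
  define K where "K = 35 * s2 / 8 + 3 / 2"
  have "c * K \<le> (1 / 15.9) * 7.7125"
    using cb c0 s2b by (intro mult_mono) (auto simp: K_def)
  then have cK: "c * K \<le> 1 / 2" by simp
  have ident: "s2 * A^2 - (s2 + 3) * c * R * A + R^2 * c / 2 - 3 * s2 * c^2 * R^2
      = s2 * (A - (2 + 3 * s2) * c * R / 4)^2 + R^2 * c * (1/2 - c * K)"
  proof -
    have sq: "s2 * (s2 * x) = 2 * x" for x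
      using s2sq by (metis mult.assoc power2_eq_square)
    show ?thesis unfolding K_def by (simp add: power2_eq_square field_simps sq)
  qed
  have "0 \<le> s2 * (A - (2 + 3 * s2) * c * R / 4)^2 + R^2 * c * (1/2 - c * K)"
    using cK s2b c0 by (intro add_nonneg_nonneg mult_nonneg_nonneg) auto
  then have "s2 * L \<le> (R/2 - A) * R * c"
    using ident quad s2b s2sq mult_left_mono[OF quad, of s2]
    by (simp add: s2_def power2_eq_square algebra_simps)
  then have "L / (R * (c / s2)) \<le> R/2 - A"
    using R0 c0 s2b by (simp add: field_simps)
  then show ?thesis unfolding s2_def by linarith
qed

lemma sq_add_mult_le_sqrt:
  fixes a R delta0 :: real
  assumes a: "0 \<le> a" and R: "0 \<le> R" and delta0: "0 \<le> delta0" "delta0 \<le> 2"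
    and bound: "2 * a^2 \<le> delta0 * R^2"
  shows "a^2 + a * R \<le> sqrt (2 * delta0) * R^2"
proof -
  define s where "s = sqrt (delta0 / 2)"
  have s: "0 \<le> s" "s^2 = delta0 / 2" "s \<le> 1" using delta0 by (simp_all add: s_def)
  have "delta0 * R^2 = 2 * (s^2 * R^2)" using s(2) by simp
  then have a_sq: "a^2 \<le> s^2 * R^2" using bound by linarith
  have "a \<le> s * R"
  proof (rule power2_le_imp_le)
    show "a^2 \<le> (s * R)^2" using a_sq by (simp add: power_mult_distrib)
  qed (use s(1) R in simp)
  then have "a * R \<le> s * R^2" using mult_right_mono[OF _ R, of a "s * R"] by (simp add: power2_eq_square mult.assoc)
  moreover have "s^2 * R^2 \<le> s * R^2"
  proof (rule mult_right_mono)
    show "s^2 \<le> s" using s(1,3) by (simp add: power2_eq_square mult_left_le_one_le)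
  qed simp
  ultimately have "a^2 + a * R \<le> (2 * s) * R^2" using a_sq by linarith
  also have "2 * s = sqrt (2 * delta0)"
    unfolding s_def using real_sqrt_mult[of 4 "delta0 / 2"] by simp
  finally show ?thesis .
qed

lemma penalty_coefficient_le:
  fixes mu s0 s1 Jh R delta0 :: real
  assumes mu: "0 \<le> mu" and nonneg: "0 \<le> s0" "0 \<le> s1" "0 \<le> Jh"
    and R: "0 < R" and delta0: "0 \<le> delta0" "delta0 \<le> 2"
    and mu_bound: "2 * (mu * (1 + s0 + Jh))^2 \<le> delta0 * R^2" and s1: "mu * s1 \<le> R"
  shows "mu^2 * (s0 + s1) * Jh \<le> sqrt (2 * delta0) * R^2"
proof -
  define a where "a = mu * (1 + s0 + Jh)"
  have a0: "0 \<le> a" and le_a: "mu * s0 \<le> a" "mu * Jh \<le> a"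
    using mu nonneg by (simp_all add: a_def mult_left_mono)
  have "mu^2 * (s0 + s1) * Jh = (mu * s0) * (mu * Jh) + (mu * s1) * (mu * Jh)"
    by (simp add: power2_eq_square algebra_simps)
  also have "\<dots> \<le> a * a + R * a"
  proof (rule add_mono)
    show "(mu * s0) * (mu * Jh) \<le> a * a"
      using mult_mono[OF le_a(1) le_a(2)] a0 mu nonneg by simp
    show "(mu * s1) * (mu * Jh) \<le> R * a"
      using mult_mono[OF s1 le_a(2)] R mu nonneg by simp
  qed
  also have "\<dots> = a^2 + a * R" by (simp add: power2_eq_square mult.commute)
  also have "\<dots> \<le> sqrt (2 * delta0) * R^2"
    using a0 R delta0 mu_bound by (intro sq_add_mult_le_sqrt) (auto simp: a_def)
  finally show ?thesis .
qed

context
  fixes G :: "(real^'d \<Rightarrow> real) set"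
    and J :: "(real^'d \<Rightarrow> real) \<Rightarrow> (real^'d \<Rightarrow> real) \<Rightarrow> real" and Qz
  assumes SI: "semi_inner_on G J" and GS: "L2_subspace Qz G"
begin

text \<open>The basic inequality, the event bounds, compatibility and the bound on mu J(g0) combine to
  a quadratic inequality in A = sqrt(||X b + d||^2 + mu^2 J(d)^2).\<close>
lemma tau_le_half_of_basic_inequality:
  assumes delta0: "0 < delta0" "delta0 \<le> 1/253" and lam: "0 < lam" and R: "0 < R"
    and g0: "g0 \<in> G" and d: "d \<in> G"
    and mu_g0: "2 * mu^2 * (seminormJ J g0)^2 \<le> delta0 * R^2"
    and Lam: "0 < Lam" "Lam * (b \<bullet> b) \<le> pop_sq M b d"
    and lam_bound: "4 * lam^2 * real (card {j. beta0 $ j \<noteq> 0}) / Lam \<le> delta0 * R^2"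
    and emp: "pop_sq M b d - delta0 * R^2 \<le> emp_sq n xs zs b d"
    and noise: "N \<le> delta0 * R^2"
    and basic: "emp_sq n xs zs b d + lam * l1norm (beta0 + b) + mu^2 * (2 * J g0 d + J d d)
      \<le> 2 * N + lam * l1norm beta0"
  shows "tau M J lam mu delta0 R b d \<le> R / 2"
proof -
  define c where "c = sqrt delta0"
  have c0: "0 < c" and cc: "c^2 = delta0" using delta0 by (simp_all add: c_def)
  define S where "S = {j. beta0 $ j \<noteq> 0}"
  define P where "P = pop_sq M b d"
  define A where "A = sqrt (P + mu^2 * (seminormJ J d)^2)"
  have P0: "0 \<le> P" by (simp add: P_def pop_sq_nonneg)
  have A0: "0 \<le> A" and AA: "A^2 = P + mu^2 * (seminormJ J d)^2"
    using P0 by (simp_all add: A_def)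
  have P_le: "P \<le> A^2" using AA by simp
  have step: "A^2 + lam * l1norm b
      \<le> 3 * c^2 * R^2 + 2 * lam * l1norm_on S b + 2 * mu^2 * (seminormJ J g0 * seminormJ J d)"
  proof -
    have "lam * (l1norm beta0 + l1norm b - 2 * l1norm_on S b) \<le> lam * l1norm (beta0 + b)"
      using l1norm_add_ge lam unfolding S_def by (intro mult_left_mono) auto
    moreover have "- (seminormJ J g0 * seminormJ J d) \<le> J g0 d"
      using J_Cauchy_Schwarz[OF SI GS g0 d] by linarith
    then have "mu^2 * (- 2 * (seminormJ J g0 * seminormJ J d) + (seminormJ J d)^2)
        \<le> mu^2 * (2 * J g0 d + J d d)"
      using seminormJ_sq[OF SI d] by (intro mult_left_mono) (auto simp: mult.commute)
    ultimately show ?thesis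
      using basic emp noise AA cc unfolding P_def by (simp add: algebra_simps)
  qed
  have compat: "2 * lam * l1norm_on S b \<le> c * R * A"
  proof (rule power2_le_imp_le)
    have "(2 * lam * l1norm_on S b)^2 \<le> 4 * lam^2 * (real (card S) * (b \<bullet> b))"
      using mult_left_mono[OF l1norm_on_sq_le[of S b], of "4 * lam^2"] by (simp add: power_mult_distrib)
    also have "\<dots> = (4 * lam^2 * real (card S) / Lam) * (Lam * (b \<bullet> b))"
      using Lam(1) by simp
    also have "\<dots> \<le> (c * R)^2 * A^2"
      using lam_bound Lam P_le cc unfolding S_def P_def
      by (intro mult_mono) (auto simp: power_mult_distrib)
    finally show "(2 * lam * l1norm_on S b)^2 \<le> (c * R * A)^2"
      by (simp add: power_mult_distrib)
  qed (use c0 R A0 in simp)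
  have cross: "2 * mu^2 * (seminormJ J g0 * seminormJ J d) \<le> sqrt 2 * c * R * A"
  proof (rule power2_le_imp_le)
    have "(2 * mu^2 * (seminormJ J g0 * seminormJ J d))^2
        = 2 * (2 * mu^2 * (seminormJ J g0)^2) * (mu^2 * (seminormJ J d)^2)"
      by (simp add: power2_eq_square)
    also have "\<dots> \<le> 2 * (c^2 * R^2) * A^2"
      using mult_mono[of "2 * (2 * mu^2 * (seminormJ J g0)^2)" "2 * (c^2 * R^2)"
          "mu^2 * (seminormJ J d)^2" "A^2"] mu_g0 P0 AA cc delta0(1) by simp
    finally show "(2 * mu^2 * (seminormJ J g0 * seminormJ J d))^2 \<le> (sqrt 2 * c * R * A)^2"
      by (simp add: power_mult_distrib)
  qed (use c0 R A0 in simp)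
  have "(1 + sqrt 2) * c * R * A = c * R * A + sqrt 2 * c * R * A"
    by (simp add: algebra_simps)
  then have "A^2 + lam * l1norm b \<le> 3 * c^2 * R^2 + (1 + sqrt 2) * c * R * A"
    using step compat cross by linarith
  then have "lam * l1norm b / (R * (c / sqrt 2)) + A \<le> R / 2"
    using delta0 cc by (intro tau_le_half_of_quadratic_bound[OF c0 _ R]) auto
  then show ?thesis
    unfolding tau_def A_def P_def c_def by (simp add: real_sqrt_divide)
qed

lemma minimizer_basic_inequality:
  assumes Y: "\<forall>i. Y i = xs i \<bullet> beta0 + g0 (zs i) + e i"
    and g0: "g0 \<in> G" and g_hat: "g_hat \<in> G"
    and opt: "\<forall>b. \<forall>g\<in>G. crit J lam mu n Y xs zs beta_hat g_hat \<le> crit J lam mu n Y xs zs b g"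
    and t: "0 \<le> t" "t \<le> 1" and lam: "0 \<le> lam"
    and b: "b = t *\<^sub>R (beta_hat - beta0)" and d: "d = (\<lambda>z. t * (g_hat z - g0 z))"
  shows "emp_sq n xs zs b d + lam * l1norm (beta0 + b) + mu^2 * (2 * J g0 d + J d d)
    \<le> 2 * ((\<Sum>i<n. e i * (xs i \<bullet> b + d (zs i))) / real n) + lam * l1norm beta0"
proof -
  have dG: "d \<in> G"
    unfolding d using L2_subspace_scale[OF GS L2_subspace_diff[OF GS g_hat g0]] .
  have "crit J lam mu n Y xs zs (beta0 + b) (\<lambda>z. g0 z + d z)
      \<le> (1 - t) * crit J lam mu n Y xs zs beta0 g0 + t * crit J lam mu n Y xs zs beta_hat g_hat"
    unfolding b d by (rule crit_convex[OF SI GS t lam g0 g_hat])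
  also have "\<dots> \<le> crit J lam mu n Y xs zs beta0 g0"
    using opt g0 t by (simp add: algebra_simps mult_left_mono)
  finally show ?thesis
    unfolding crit_expand[OF SI GS Y g0 dG] by (simp add: right_diff_distrib)
qed

text \<open>Shrinking the estimation error towards the truth by t = R / (R + tau) puts it into F(R), where
  the event applies and the basic inequality still holds by convexity; the resulting bound R/2
  on the shrunken error rules out tau > R.\<close>
lemma tau_estimation_error_le:
  assumes Y: "\<forall>i. Y i = xs i \<bullet> beta0 + g0 (zs i) + e i"
    and g0: "g0 \<in> G" and g_hat: "g_hat \<in> G"
    and opt: "\<forall>b. \<forall>g\<in>G. crit J lam mu n Y xs zs beta_hat g_hat \<le> crit J lam mu n Y xs zs b g"
    and delta0: "0 < delta0" "delta0 \<le> 1/253" and lam: "0 < lam" and R: "0 < R"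
    and mu_g0: "2 * mu^2 * (seminormJ J g0)^2 \<le> delta0 * R^2"
    and Lam: "0 < Lam" "\<forall>b. \<forall>g\<in>G. Lam * (b \<bullet> b) \<le> pop_sq M b g"
    and lam_bound: "4 * lam^2 * real (card {j. beta0 $ j \<noteq> 0}) / Lam \<le> delta0 * R^2"
    and T: "event_T M G J lam mu delta0 R n xs zs e"
  shows "tau M J lam mu delta0 R (beta_hat - beta0) (\<lambda>z. g_hat z - g0 z) \<le> R"
proof -
  define dh where "dh = (\<lambda>z. g_hat z - g0 z)"
  have dh: "dh \<in> G" unfolding dh_def by (rule L2_subspace_diff[OF GS g_hat g0])
  define th where "th = tau M J lam mu delta0 R (beta_hat - beta0) dh"
  have th0: "0 \<le> th" unfolding th_def using lam R delta0 by (intro tau_nonneg) auto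
  define t where "t = R / (R + th)"
  have t: "0 \<le> t" "t \<le> 1" using R th0 by (simp_all add: t_def)
  define b where "b = t *\<^sub>R (beta_hat - beta0)"
  define d where "d = (\<lambda>z. t * dh z)"
  have d: "d \<in> G" unfolding d_def by (rule L2_subspace_scale[OF GS dh])
  have tau_bd: "tau M J lam mu delta0 R b d = t * th"
    unfolding b_def d_def th_def by (rule tau_scale[OF SI GS t(1) dh])
  define N where "N = (\<Sum>i<n. e i * (xs i \<bullet> b + d (zs i))) / real n"
  have "t * th \<le> R" using R th0 by (simp add: t_def divide_le_eq)
  then have "\<bar>emp_sq n xs zs b d - pop_sq M b d\<bar> \<le> delta0 * R^2"
    and "\<bar>\<Sum>i<n. e i * (xs i \<bullet> b + d (zs i))\<bar> / real n \<le> delta0 * R^2"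
    using T d tau_bd unfolding event_T_def by auto
  moreover have "N \<le> \<bar>\<Sum>i<n. e i * (xs i \<bullet> b + d (zs i))\<bar> / real n"
    unfolding N_def by (simp add: divide_right_mono)
  ultimately have emp: "pop_sq M b d - delta0 * R^2 \<le> emp_sq n xs zs b d"
    and noise: "N \<le> delta0 * R^2" by linarith+
  have basic: "emp_sq n xs zs b d + lam * l1norm (beta0 + b) + mu^2 * (2 * J g0 d + J d d)
      \<le> 2 * N + lam * l1norm beta0"
    unfolding N_def using lam
    by (intro minimizer_basic_inequality[OF Y g0 g_hat opt t]) (auto simp: b_def d_def dh_def)
  have "Lam * (b \<bullet> b) \<le> pop_sq M b d" using Lam(2) d by blast
  then have "tau M J lam mu delta0 R b d \<le> R / 2"
    by (rule tau_le_half_of_basic_inequality[OF delta0 lam R g0 d mu_g0 Lam(1) _ lam_bound emp noise basic])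
  then have "R * th / (R + th) \<le> R / 2" using tau_bd by (simp add: t_def)
  then show ?thesis using R th0 by (simp add: th_def dh_def field_simps)
qed

lemma abs_sum_J_mult_le:
  assumes g: "g \<in> G" and f: "\<forall>j. f j \<in> G" and C: "\<forall>j. seminormJ J (f j) \<le> C"
  shows "\<bar>\<Sum>j\<in>UNIV. J g (f j) * v $ j\<bar> \<le> seminormJ J g * C * l1norm v"
proof -
  have "\<bar>\<Sum>j\<in>UNIV. J g (f j) * v $ j\<bar> \<le> (\<Sum>j\<in>UNIV. \<bar>J g (f j)\<bar> * \<bar>v $ j\<bar>)"
    using sum_abs[of "\<lambda>j. J g (f j) * v $ j" UNIV] by (simp add: abs_mult)
  also have "\<dots> \<le> (\<Sum>j\<in>UNIV. seminormJ J g * C * \<bar>v $ j\<bar>)"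
  proof (rule sum_mono)
    fix j
    have "\<bar>J g (f j)\<bar> \<le> seminormJ J g * seminormJ J (f j)"
      using J_Cauchy_Schwarz[OF SI GS g] f by simp
    also have "\<dots> \<le> seminormJ J g * C"
      using C seminormJ_nonneg[OF SI g] by (simp add: mult_left_mono)
    finally show "\<bar>J g (f j)\<bar> * \<bar>v $ j\<bar> \<le> seminormJ J g * C * \<bar>v $ j\<bar>"
      by (simp add: mult_right_mono)
  qed
  also have "\<dots> = seminormJ J g * C * l1norm v"
    by (simp add: l1norm_def sum_distrib_left)
  finally show ?thesis .
qed

lemma penalty_cross_term_le:
  assumes g0: "g0 \<in> G" and g_hat: "g_hat \<in> G"
    and hG: "\<forall>j. (\<lambda>z. h z $ j) \<in> G" and hJ: "\<forall>j. seminormJ J (\<lambda>z. h z $ j) \<le> Jh"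
    and mu: "0 \<le> mu" and R: "0 < R" and delta0: "0 \<le> delta0" "delta0 \<le> 2"
    and mu_K: "2 * (mu * (1 + seminormJ J g0 + Jh))^2 \<le> delta0 * R^2"
    and consistency: "mu * seminormJ J (\<lambda>z. g_hat z - g0 z) \<le> R"
  shows "\<bar>mu^2 * (\<Sum>j\<in>UNIV. J g_hat (\<lambda>z. h z $ j) * (beta_hat $ j - beta0 $ j))\<bar>
    \<le> sqrt (2 * delta0) * R^2 * l1norm (beta_hat - beta0)"
proof -
  define dh where "dh = (\<lambda>z. g_hat z - g0 z)"
  have dh: "dh \<in> G" unfolding dh_def by (rule L2_subspace_diff[OF GS g_hat g0])
  have Jh0: "0 \<le> Jh"
    using seminormJ_nonneg[OF SI hG[rule_format]] hJ[rule_format] by (rule order_trans)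
  have "g_hat = (\<lambda>z. g0 z + dh z)" by (simp add: dh_def)
  then have "seminormJ J g_hat \<le> seminormJ J g0 + seminormJ J dh"
    using seminormJ_add_le[OF SI GS g0 dh] by simp
  then have "mu^2 * seminormJ J g_hat * Jh \<le> mu^2 * (seminormJ J g0 + seminormJ J dh) * Jh"
    using Jh0 by (simp add: mult_left_mono mult_right_mono)
  also have "\<dots> \<le> sqrt (2 * delta0) * R^2"
    using mu delta0 seminormJ_nonneg[OF SI g0] seminormJ_nonneg[OF SI dh] Jh0 R mu_K consistency
    by (intro penalty_coefficient_le) (auto simp: dh_def)
  finally have coefficient: "mu^2 * seminormJ J g_hat * Jh \<le> sqrt (2 * delta0) * R^2" .
  have "\<bar>mu^2 * (\<Sum>j\<in>UNIV. J g_hat (\<lambda>z. h z $ j) * (beta_hat $ j - beta0 $ j))\<bar>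
      \<le> mu^2 * (seminormJ J g_hat * Jh * l1norm (beta_hat - beta0))"
    using abs_sum_J_mult_le[OF g_hat, of "\<lambda>j z. h z $ j" Jh "beta_hat - beta0"] hG hJ
    by (simp add: abs_mult mult_left_mono)
  also have "\<dots> \<le> sqrt (2 * delta0) * R^2 * l1norm (beta_hat - beta0)"
    using mult_right_mono[OF coefficient l1norm_nonneg[of "beta_hat - beta0"]] by (simp add: mult_ac)
  finally show ?thesis .
qed

end

theorem mainTheorem10:
  fixes M :: "((real^'p) \<times> (real^'d)) measure"
    and G :: "(real^'d \<Rightarrow> real) set"
    and J :: "(real^'d \<Rightarrow> real) \<Rightarrow> (real^'d \<Rightarrow> real) \<Rightarrow> real"
    and h :: "real^'d \<Rightarrow> real^'p"
    and beta0 :: "real^'p" and g0 :: "real^'d \<Rightarrow> real"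
    and Jh delta0 lam mu R :: real
    and n :: nat and xs :: "nat \<Rightarrow> real^'p" and zs :: "nat \<Rightarrow> real^'d" and e :: "nat \<Rightarrow> real"
    and Y :: "nat \<Rightarrow> real"
    and beta_hat :: "real^'p" and g_hat :: "real^'d \<Rightarrow> real"
  assumes "prob_space M"
    and "sets M = sets borel"
    and "\<forall>j. integrable M (\<lambda>\<omega>. (fst \<omega> $ j)^2)"
    and "L2_subspace (distr M borel snd) G"
    and "semi_inner_on G J"
    and "g0 \<in> G"
    and "is_cond_exp_x_given_z M h"
    \<comment> \<open>(C3)\<close>
    and "0 < min_eigenvalue (cov_xtilde M h)"
    and "\<forall>i j. integrable M (\<lambda>\<omega>. h (snd \<omega>) $ i * h (snd \<omega>) $ j)"
    \<comment> \<open>(C6)\<close>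
    and "\<forall>j. (\<lambda>z. h z $ j) \<in> G"
    and "\<forall>j. seminormJ J (\<lambda>z. h z $ j) \<le> Jh"
    and "0 < delta0" and "delta0 \<le> 1/253"
    and "0 < lam" and "0 < mu" and "0 < R"
    and "mu^2 \<le> delta0 * R^2 / (2 * (1 + seminormJ J g0 + Jh)^2)"
    and "4 * lam^2 * real (card {j. beta0 $ j \<noteq> 0}) / min_eigenvalue (cov_xtilde M h) \<le> delta0 * R^2"
    and "0 < n"
    and "\<forall>i. Y i = xs i \<bullet> beta0 + g0 (zs i) + e i"
    and "event_T M G J lam mu delta0 R n xs zs e"
    and "g_hat \<in> G"
    and "\<forall>b. \<forall>g\<in>G. crit J lam mu n Y xs zs beta_hat g_hat \<le> crit J lam mu n Y xs zs b g"
  shows "\<bar>mu^2 * (\<Sum>j\<in>UNIV. J g_hat (\<lambda>z. h z $ j) * (beta_hat $ j - beta0 $ j))\<bar>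
           \<le> sqrt (2 * delta0) * R^2 * l1norm (beta_hat - beta0)"
proof -
  note PS = assms(1) and SM = assms(2) and L2x = assms(3) and GS = assms(4) and SI = assms(5)
    and g0 = assms(6) and CE = assms(7) and Lam = assms(8) and hh = assms(9) and hG = assms(10)
    and hJ = assms(11) and delta0 = assms(12,13) and lam = assms(14) and mu = assms(15)
    and R = assms(16) and mu_bound = assms(17) and lam_bound = assms(18) and Y = assms(20)
    and T = assms(21) and g_hat = assms(22) and opt = assms(23)
  define K where "K = 1 + seminormJ J g0 + Jh"
  have sJ0: "0 \<le> seminormJ J g0" by (rule seminormJ_nonneg[OF SI g0])
  have "0 \<le> Jh" using seminormJ_nonneg[OF SI hG[rule_format]] hJ[rule_format] by (rule order_trans)
  then have "0 < K" "seminormJ J g0 \<le> K" using sJ0 by (simp_all add: K_def)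
  then have mu_K: "2 * (mu * K)^2 \<le> delta0 * R^2"
    using mu_bound by (simp add: K_def pos_le_divide_eq power_mult_distrib mult_ac)
  then have mu_g0: "2 * mu^2 * (seminormJ J g0)^2 \<le> delta0 * R^2"
    using mult_left_mono[OF power_mono[OF \<open>seminormJ J g0 \<le> K\<close> sJ0, of 2], of "2 * mu^2"]
    by (simp add: power_mult_distrib)
  have "\<forall>b. \<forall>g\<in>G. min_eigenvalue (cov_xtilde M h) * (b \<bullet> b) \<le> pop_sq M b g"
    using min_eigenvalue_cov_le_pop_sq[OF SM PS CE L2x hh GS] by blast
  then have "tau M J lam mu delta0 R (beta_hat - beta0) (\<lambda>z. g_hat z - g0 z) \<le> R"
    by (rule tau_estimation_error_le[OF SI GS Y g0 g_hat opt delta0 lam R mu_g0 Lam _ lam_bound T])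
  moreover have "mu * seminormJ J (\<lambda>z. g_hat z - g0 z)
      \<le> tau M J lam mu delta0 R (beta_hat - beta0) (\<lambda>z. g_hat z - g0 z)"
    using lam mu delta0 L2_subspace_diff[OF GS g_hat g0]
    by (intro mu_seminormJ_le_tau[OF SI GS _ _ R]) auto
  ultimately show ?thesis
    using mu delta0 mu_K
    by (intro penalty_cross_term_le[OF SI GS g0 g_hat hG hJ _ R]) (auto simp: K_def)
qed

end
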